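(* Let $P>0$ and $\sigma_b^2>0$. For each integer $L\ge1$ let $\beta_L\in(0,1)$ be the solution of $$\frac{(1-\beta^{2L})^2}{L^2\beta^{2L}(1-\beta^2)}=\frac{P}{\sigma_b^2 L},$$ and let $C_{sum}^{(L)}=-L\log_2(\beta_L)$. Then $$\lim_{L\to\infty}C_{sum}^{(L)}=\frac{\alpha}{\ln 2},$$ where $\alpha>0$ satisfies $$\frac{(1-e^{-2\alpha})^2}{2\alpha e^{-2\alpha}}=\frac{P}{\sigma_b^2}.$$
   Context: $C_{sum}^{(L)}$ is the maximum sum rate, with perfect feedback and broadcast SNR $P/\sigma_b^2$, of the $L$-user BMCL linear feedback scheme for the real AWGN broadcast channel with feedback; the claim is a statement about the displayed quantities only. *)

theory Defs
  imports Complex_Main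
begin

end

theory Submission
  imports Defs
begin

(* Put a_L = -L ln beta_L, so that C_sum^(L) = a_L / ln 2 and beta_L^(2L) = exp (-2 a_L).
   Let g = snr_of_rate be the function in the equation for alpha, so g alpha = P / sigma_b^2 =: c.
   The equation for beta_L becomes g a_L = c (1 - exp (-y)) / y with y = 2 a_L / L, and
   (1 - exp (-y)) / y lies between 1 - y and 1. Since g x = 2 sinh x ^ 2 / x is strictly increasing
   on (0, oo), the upper bound gives a_L <= alpha, hence y <= 2 alpha / L, so g a_L -> g alpha;
   strict monotonicity of g then forces a_L -> alpha. *)

definition snr_of_rate :: "real \<Rightarrow> real" where
  "snr_of_rate x = (1 - exp (-2*x))\<^sup>2 / (2*x*exp (-2*x))"

lemma snr_of_rate_eq_sinh: "snr_of_rate x = 2 * sinh x ^ 2 / x"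
proof -
  have e: "exp (-2*x) = exp (-x) ^ 2"
    by (simp flip: exp_of_nat_mult)
  have s: "1 - exp (-x) ^ 2 = 2 * exp (-x) * sinh x"
    by (simp add: sinh_field_def power2_eq_square field_simps flip: exp_add)
  have "snr_of_rate x = (2 * exp (-x) * sinh x)\<^sup>2 / (2 * x * exp (-x) ^ 2)"
    unfolding snr_of_rate_def e s ..
  also have "\<dots> = 2 * sinh x ^ 2 / x"
    by (simp add: power_mult_distrib power2_eq_square)
  finally show ?thesis .
qed

lemma tanh_real_less_double:
  fixes x :: real
  assumes "0 < x"
  shows "tanh x < 2 * x"
proof -
  have "0 < 1 - exp (-2*x)"
    using assms by simp
  have "tanh x = (1 - exp (-2*x)) / (1 + exp (-2*x))"
    by (rule tanh_real_altdef)
  also have "\<dots> < (1 - exp (-2*x)) / 1"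
    using \<open>0 < 1 - exp (-2*x)\<close> by (intro divide_strict_left_mono) (auto intro: add_pos_pos)
  also have "\<dots> \<le> 2 * x"
    using exp_minus_ge[of "2*x"] by simp
  finally show ?thesis .
qed

lemma strict_mono_on_snr_of_rate: "strict_mono_on {0<..} snr_of_rate"
proof (rule strict_mono_onI)
  fix x y :: real
  assume "x \<in> {0<..}" "y \<in> {0<..}" "x < y"
  show "snr_of_rate x < snr_of_rate y"
    unfolding snr_of_rate_eq_sinh
  proof (rule DERIV_pos_imp_increasing_open[OF \<open>x < y\<close>])
    fix z :: real
    assume "x < z" "z < y"
    then have "0 < z"
      using \<open>x \<in> {0<..}\<close> by simp
    define d where "d = 2 * sinh z * (2 * z * cosh z - sinh z) / z\<^sup>2"
    have "((\<lambda>z. 2 * sinh z ^ 2 / z) has_real_derivative d) (at z)"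
      unfolding d_def using \<open>0 < z\<close>
      by (auto intro!: derivative_eq_intros simp: power2_eq_square algebra_simps)
    moreover have "sinh z < 2 * z * cosh z"
      using tanh_real_less_double[OF \<open>0 < z\<close>] by (simp add: tanh_def divide_less_eq)
    then have "0 < d"
      unfolding d_def using \<open>0 < z\<close> by simp
    ultimately show "\<exists>d. ((\<lambda>z. 2 * sinh z ^ 2 / z) has_real_derivative d) (at z) \<and> 0 < d"
      by blast
  next
    show "continuous_on {x..y} (\<lambda>z. 2 * sinh z ^ 2 / z)"
      using \<open>x \<in> {0<..}\<close> by (auto intro!: continuous_intros)
  qed
qed

lemma one_minus_exp_neg_div_le_1:
  fixes y :: real
  assumes "0 < y"
  shows "(1 - exp (-y)) / y \<le> 1"
  using exp_minus_ge[of y] assms by simp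

lemma one_minus_exp_neg_div_ge:
  fixes y :: real
  assumes "0 < y"
  shows "1 - y \<le> (1 - exp (-y)) / y"
proof -
  have "y \<le> exp y - 1"
    using exp_ge_add_one_self[of y] by linarith
  have "y * (1 - y) \<le> exp (-y) * y"
    using exp_minus_ge[of y] assms by (simp add: mult.commute mult_right_mono)
  also have "\<dots> \<le> exp (-y) * (exp y - 1)"
    using \<open>y \<le> exp y - 1\<close> by (intro mult_left_mono) simp_all
  also have "\<dots> = 1 - exp (-y)"
    by (simp add: algebra_simps flip: exp_add)
  finally show ?thesis
    using assms by (simp add: le_divide_eq mult.commute)
qed

lemma tendsto_of_strict_mono_on_from_below:
  fixes f :: "real \<Rightarrow> 'b::linorder_topology"
  assumes mono: "strict_mono_on {l<..} f" and "l < \<alpha>"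
    and bounds: "eventually (\<lambda>n. l < x n \<and> x n \<le> \<alpha>) F"
    and lim: "((\<lambda>n. f (x n)) \<longlongrightarrow> f \<alpha>) F"
  shows "(x \<longlongrightarrow> \<alpha>) F"
proof (rule order_tendstoI)
  fix b
  assume "b < \<alpha>"
  define b' where "b' = max b ((l + \<alpha>) / 2)"
  have "l < b'" "b' < \<alpha>" "b \<le> b'"
    using \<open>l < \<alpha>\<close> \<open>b < \<alpha>\<close> unfolding b'_def by (simp_all add: max_def)
  then have "f b' < f \<alpha>"
    by (intro strict_mono_onD[OF mono]) auto
  with lim have "eventually (\<lambda>n. f b' < f (x n)) F"
    by (rule order_tendstoD)
  with bounds show "eventually (\<lambda>n. b < x n) F"
  proof eventually_elim
    case (elim n)
    have "\<not> x n \<le> b'"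
    proof
      assume "x n \<le> b'"
      then have "f (x n) \<le> f b'"
        using strict_mono_on_leD[OF mono] elim \<open>l < b'\<close> by simp
      with elim show False
        by simp
    qed
    then show ?case
      using \<open>b \<le> b'\<close> by simp
  qed
next
  fix b
  assume "\<alpha> < b"
  from bounds show "eventually (\<lambda>n. x n < b) F"
    by eventually_elim (use \<open>\<alpha> < b\<close> in auto)
qed

lemma snr_of_rate_of_beta:
  fixes b c :: real and L :: nat
  assumes b: "0 < b" "b < 1" and L: "L \<ge> 1"
    and eq: "(1 - b ^ (2*L))\<^sup>2 / ((real L)\<^sup>2 * b ^ (2*L) * (1 - b\<^sup>2)) = c / real L"
  defines "a \<equiv> - real L * ln b"
  defines "y \<equiv> 2 * a / real L"
  shows "snr_of_rate a = c * ((1 - exp (-y)) / y)"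
proof -
  have "0 < a"
    using b L by (simp add: a_def mult_pos_neg)
  have pow_ln: "b ^ n = exp (real n * ln b)" for n
    using b by (simp add: exp_of_nat_mult)
  have pow_eq: "b ^ (2*L) = exp (-2*a)"
    by (simp add: pow_ln a_def)
  have sq_eq: "b\<^sup>2 = exp (-y)"
    using L by (simp add: pow_ln y_def a_def)
  have "0 < 1 - b\<^sup>2"
    using b by (simp add: power_less_one_iff)
  then have "(real L)\<^sup>2 * exp (-2*a) * (1 - b\<^sup>2) \<noteq> 0"
    using L by simp
  then have "(1 - exp (-2*a))\<^sup>2 = c / real L * ((real L)\<^sup>2 * exp (-2*a) * (1 - b\<^sup>2))"
    using eq unfolding pow_eq by (metis nonzero_divide_eq_eq)
  also have "\<dots> = c * real L * (1 - b\<^sup>2) * exp (-2*a)"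
    using L by (simp add: power2_eq_square)
  finally have "snr_of_rate a = c * real L * (1 - b\<^sup>2) / (2 * a)"
    by (simp add: snr_of_rate_def)
  also have "\<dots> = c * ((1 - exp (-y)) / y)"
    using \<open>0 < a\<close> L by (simp add: sq_eq y_def)
  finally show ?thesis .
qed

lemma snr_of_rate_bounds_of_beta:
  fixes b c \<alpha> :: real and L :: nat
  assumes "0 < \<alpha>" and snr_\<alpha>: "snr_of_rate \<alpha> = c" and "0 < c"
    and b: "0 < b" "b < 1" and L: "L \<ge> 1"
    and eq: "(1 - b ^ (2*L))\<^sup>2 / ((real L)\<^sup>2 * b ^ (2*L) * (1 - b\<^sup>2)) = c / real L"
  defines "a \<equiv> - real L * ln b"
  shows "0 < a" "a \<le> \<alpha>" "c * (1 - 2 * \<alpha> / real L) \<le> snr_of_rate a" "snr_of_rate a \<le> c"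
proof -
  define y where "y = 2 * a / real L"
  have snr_a: "snr_of_rate a = c * ((1 - exp (-y)) / y)"
    using snr_of_rate_of_beta[OF b L eq] by (simp add: a_def y_def)
  show "0 < a"
    using b L by (simp add: a_def mult_pos_neg)
  then have "0 < y"
    using L by (simp add: y_def)
  show "snr_of_rate a \<le> c"
    unfolding snr_a
    using mult_left_le[OF one_minus_exp_neg_div_le_1[OF \<open>0 < y\<close>]] \<open>0 < c\<close> by simp
  show "a \<le> \<alpha>"
  proof (rule ccontr)
    assume "\<not> a \<le> \<alpha>"
    then have "snr_of_rate \<alpha> < snr_of_rate a"
      using strict_mono_onD[OF strict_mono_on_snr_of_rate] \<open>0 < \<alpha>\<close> by simp
    with \<open>snr_of_rate a \<le> c\<close> snr_\<alpha> show False
      by simp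
  qed
  then have "1 - 2 * \<alpha> / real L \<le> 1 - y"
    using L by (simp add: y_def divide_right_mono)
  also have "\<dots> \<le> (1 - exp (-y)) / y"
    using one_minus_exp_neg_div_ge[OF \<open>0 < y\<close>] .
  finally show "c * (1 - 2 * \<alpha> / real L) \<le> snr_of_rate a"
    unfolding snr_a by (rule mult_left_mono) (use \<open>0 < c\<close> in simp)
qed

theorem mainTheorem3:
  fixes P sb2 \<alpha> :: real and \<beta> :: "nat \<Rightarrow> real"
  assumes "P > 0" and "sb2 > 0"
    and "\<And>L. L \<ge> 1 \<Longrightarrow> 0 < \<beta> L \<and> \<beta> L < 1"
    and "\<And>L. L \<ge> 1 \<Longrightarrow>
           (1 - \<beta> L ^ (2*L))\<^sup>2 / ((real L)\<^sup>2 * \<beta> L ^ (2*L) * (1 - (\<beta> L)\<^sup>2))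
             = P / (sb2 * real L)"
    and "\<alpha> > 0"
    and "(1 - exp (-2*\<alpha>))\<^sup>2 / (2*\<alpha>*exp (-2*\<alpha>)) = P / sb2"
  shows "(\<lambda>L. - real L * log 2 (\<beta> L)) \<longlonglongrightarrow> \<alpha> / ln 2"
proof -
  define c where "c = P / sb2"
  define a where "a L = - real L * ln (\<beta> L)" for L
  have "0 < c"
    using assms(1,2) by (simp add: c_def)
  have snr_\<alpha>: "snr_of_rate \<alpha> = c"
    using assms(6) by (simp add: snr_of_rate_def c_def)
  have bounds: "\<forall>\<^sub>F L in sequentially. 0 < a L \<and> a L \<le> \<alpha> \<and>
      c * (1 - 2 * \<alpha> / real L) \<le> snr_of_rate (a L) \<and> snr_of_rate (a L) \<le> c"
    using eventually_ge_at_top[of 1]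
  proof eventually_elim
    case (elim L)
    have "0 < \<beta> L" "\<beta> L < 1"
      using assms(3)[OF elim] by auto
    moreover have "(1 - \<beta> L ^ (2*L))\<^sup>2 / ((real L)\<^sup>2 * \<beta> L ^ (2*L) * (1 - (\<beta> L)\<^sup>2)) = c / real L"
      using assms(4)[OF elim] unfolding c_def divide_divide_eq_left .
    ultimately show ?case
      using snr_of_rate_bounds_of_beta[OF assms(5) snr_\<alpha> \<open>0 < c\<close> _ _ elim] unfolding a_def by blast
  qed
  have "(\<lambda>L. c * (1 - 2 * \<alpha> / real L)) \<longlonglongrightarrow> c * (1 - 0)"
    by (intro tendsto_mult tendsto_diff tendsto_const lim_const_over_n)
  then have lim_lower: "(\<lambda>L. c * (1 - 2 * \<alpha> / real L)) \<longlonglongrightarrow> c"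
    by simp
  have range: "\<forall>\<^sub>F L in sequentially. 0 < a L \<and> a L \<le> \<alpha>"
    and lower: "\<forall>\<^sub>F L in sequentially. c * (1 - 2 * \<alpha> / real L) \<le> snr_of_rate (a L)"
    and upper: "\<forall>\<^sub>F L in sequentially. snr_of_rate (a L) \<le> c"
    using bounds by (eventually_elim, simp)+
  have "(\<lambda>L. snr_of_rate (a L)) \<longlonglongrightarrow> snr_of_rate \<alpha>"
    unfolding snr_\<alpha> by (rule tendsto_sandwich[OF lower upper lim_lower tendsto_const])
  then have "a \<longlonglongrightarrow> \<alpha>"
    by (rule tendsto_of_strict_mono_on_from_below[OF strict_mono_on_snr_of_rate assms(5) range])
  then have "(\<lambda>L. a L / ln 2) \<longlonglongrightarrow> \<alpha> / ln 2"
    by (rule tendsto_divide) simp_all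
  then show ?thesis
    by (simp add: a_def log_def)
qed

end
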